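(* Exact provisioning of each of the following queries requires sketches of size $\min(2^{\Omega(k)},\Omega(n))$ bits: (i) the boolean conjunctive query with negation $Q_{\mathrm{NOTSUB}}:\ \mathit{ans}()\,{:\!-}\,A(x),\neg B(x)$ over a schema with unary relations $A,B$ (true on $I$ iff some $x$ has $A(x)\in I$ and $B(x)\notin I$); (ii) the recursive Datalog (negation-free) st-connectivity query over a binary edge relation $E$ with constants $\mathtt{s},\mathtt{t}$: $\mathit{ans}()\,{:\!-}\,T(\mathtt{t})$; $T(y)\,{:\!-}\,E(x,y),T(x)$; $T(\mathtt{s})$.
   Context: A hypothetical $h$ maps each instance $I$ to a sub-instance $h(I)\subseteq I$; for hypotheticals $h_1,\dots,h_k$ and nonempty scenario $S\subseteq[k]$, $I[S]=\bigcup_{i\in S}h_i(I)$; $n=|I|$. A provisioning scheme for $Q$: a (possibly randomized) compression algorithm mapping $(I,h_1,\dots,h_k)$ to a sketch $\Gamma$, and an extraction algorithm that, for any scenario $S$ and using only $\Gamma$, outputs $Q(I[S])$ (correct with probability at least $0.99$ per scenario). "Requires sketches of size $\min(2^{\Omega(k)},\Omega(n))$" means: there is $c>0$ such that every such scheme produces, on some instance with at most $n$ tuples and $k$ hypotheticals, a sketch of at least $c\min(2^{ck},n)$ bits. *)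

theory Defs
  imports "HOL-Probability.Probability"
begin

definition hypothetical :: "('f set \<Rightarrow> 'f set) \<Rightarrow> bool" where
  "hypothetical h \<longleftrightarrow> (\<forall>I. h I \<subseteq> I)"

definition scenario_inst :: "'f set \<Rightarrow> ('f set \<Rightarrow> 'f set) list \<Rightarrow> nat set \<Rightarrow> 'f set" where
  "scenario_inst I hs S = (\<Union>i\<in>S. (hs ! i) I)"

definition provisioning_scheme ::
  "('f set \<Rightarrow> bool) \<Rightarrow> nat
   \<Rightarrow> ('f set \<Rightarrow> ('f set \<Rightarrow> 'f set) list \<Rightarrow> bool list pmf)
   \<Rightarrow> (bool list \<Rightarrow> nat set \<Rightarrow> bool) \<Rightarrow> bool" where
  "provisioning_scheme Q k compress extract \<longleftrightarrow>
     (\<forall>I hs S. finite I \<longrightarrow> length hs = k \<longrightarrow> (\<forall>h\<in>set hs. hypothetical h) \<longrightarrow>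
        S \<noteq> {} \<longrightarrow> S \<subseteq> {..<k} \<longrightarrow>
        measure_pmf.prob (compress I hs)
          {\<Gamma>. extract \<Gamma> S = Q (scenario_inst I hs S)} \<ge> 0.99)"

definition requires_sketch_size :: "('f set \<Rightarrow> bool) \<Rightarrow> bool" where
  "requires_sketch_size Q \<longleftrightarrow>
     (\<exists>c::real. c > 0 \<and>
       (\<forall>k n compress extract. k \<ge> 1 \<longrightarrow> provisioning_scheme Q k compress extract \<longrightarrow>
          (\<exists>I hs \<Gamma>. finite I \<and> card I \<le> n \<and> length hs = k \<and>
              (\<forall>h\<in>set hs. hypothetical h) \<and> \<Gamma> \<in> set_pmf (compress I hs) \<and>
              real (length \<Gamma>) \<ge> c * min (2 powr (c * real k)) (real n))))"

datatype ab_fact = A_fact nat | B_fact nat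

definition Q_NOTSUB :: "ab_fact set \<Rightarrow> bool" where
  "Q_NOTSUB I \<longleftrightarrow> (\<exists>x. A_fact x \<in> I \<and> B_fact x \<notin> I)"

datatype e_fact = E_fact nat nat

definition const_s :: nat where "const_s = 0"
definition const_t :: nat where "const_t = 1"

inductive T_derived :: "e_fact set \<Rightarrow> nat \<Rightarrow> bool" for I where
  T_base: "T_derived I const_s"
| T_step: "T_derived I x \<Longrightarrow> E_fact x y \<in> I \<Longrightarrow> T_derived I y"

definition Q_CONN :: "e_fact set \<Rightarrow> bool" where
  "Q_CONN I \<longleftrightarrow> T_derived I const_t"

end

theory Submission
  imports Defs "HOL-Library.Nat_Bijection"
begin

text \<open>Both bounds are reductions from index coding: a randomized sketch of a set
  \<open>x \<subseteq> {..<N}\<close> from which every membership bit can be decoded with probability 0.99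
  must have \<open>\<Omega>(N)\<close> bits, because some sketch decodes 99\<percent> of the bits of \<open>x\<close>
  correctly, and \<open>x\<close> is then determined by that sketch together with a set of at
  most \<open>N/100\<close> errors. Take \<open>N = 2\<^sup>m\<close> with \<open>2m < k\<close> and encode an index \<open>v < 2\<^sup>m\<close> as
  the scenario \<open>S\<^sub>v\<close> selecting one of two hypotheticals per bit of \<open>v\<close>; these scenarios
  form an antichain. For \<open>Q\<^sub>N\<^sub>O\<^sub>T\<^sub>S\<^sub>U\<^sub>B\<close>, the instance holds \<open>A(v), B(v)\<close> for \<open>v \<in> x\<close>, every
  hypothetical keeps all \<open>A\<close>-facts and \<open>h\<^sub>i\<close> keeps \<open>B(v)\<close> iff \<open>i \<notin> S\<^sub>v\<close>, so the query
  holds in scenario \<open>S\<^sub>w\<close> iff some \<open>v \<in> x\<close> has \<open>S\<^sub>w \<subseteq> S\<^sub>v\<close>, i.e. iff \<open>w \<in> x\<close>. For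
  connectivity, the instance is the complete binary trie of depth \<open>m\<close> rooted at \<open>s\<close>
  plus an edge from leaf \<open>v\<close> to \<open>t\<close> for every \<open>v \<in> x\<close>, and the hypotheticals for
  the bits of \<open>w\<close> keep exactly the trie edges that lead towards leaf \<open>w\<close>.
  Choosing \<open>m\<close> with \<open>2\<^sup>m \<approx> min(2\<^sup>k\<^sup>/\<^sup>2, n)\<close> gives the bound.\<close>

definition small_subsets :: "nat \<Rightarrow> nat \<Rightarrow> nat set set" where
  "small_subsets N t = {D. D \<subseteq> {..<N} \<and> card D \<le> t}"

lemma finite_small_subsets: "finite (small_subsets N t)"
  unfolding small_subsets_def by (rule finite_subset[of _ "Pow {..<N}"]) auto

lemma card_small_subsets_le:
  assumes "t \<le> N"
  shows "2^N * card (small_subsets N t) \<le> 2^t * 3^N"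
proof -
  have "small_subsets N t = (\<Union>i\<le>t. {D. D \<subseteq> {..<N} \<and> card D = i})"
    unfolding small_subsets_def by auto
  then have "card (small_subsets N t) \<le> (\<Sum>i\<le>t. card {D. D \<subseteq> {..<N} \<and> card D = i})"
    using card_UN_le[of "{..t}"] by simp
  also have "\<dots> = (\<Sum>i\<le>t. N choose i)"
    by (simp add: n_subsets)
  finally have "2^N * card (small_subsets N t) \<le> 2^N * (\<Sum>i\<le>t. N choose i)"
    by simp
  also have "\<dots> = (\<Sum>i\<le>t. (N choose i) * 2^N)"
    by (subst mult.commute) (rule sum_distrib_right)
  also have "\<dots> \<le> (\<Sum>i\<le>t. (N choose i) * (2^t * 2^(N-i)))"
  proof (rule sum_mono)
    fix i assume "i \<in> {..t}"
    then have "(2::nat)^N = 2^i * 2^(N-i)" "(2::nat)^i \<le> 2^t"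
      using assms by (auto simp flip: power_add)
    then show "(N choose i) * 2^N \<le> (N choose i) * (2^t * 2^(N-i))"
      by simp
  qed
  also have "\<dots> \<le> (\<Sum>i\<le>N. (N choose i) * (2^t * 2^(N-i)))"
    by (rule sum_mono2) (use assms in auto)
  also have "\<dots> = 2^t * (\<Sum>i\<le>N. (N choose i) * 1^i * 2^(N-i))"
    by (simp add: sum_distrib_left mult_ac)
  also have "\<dots> = 2^t * 3^N"
    using binomial_ring[of "1::nat" 2 N] by (simp add: numeral_3_eq_3)
  finally show ?thesis .
qed

lemma two_pow_mult_three_pow_le_four_pow:
  fixes a N :: nat
  assumes "5 * a \<le> 2 * N"
  shows "2^a * 3^N \<le> (4::nat)^N"
proof -
  \<comment> \<open>raise to the fifth power: \<open>4 \<cdot> 3\<^sup>5 = 972 \<le> 1024 = 4\<^sup>5\<close>\<close>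
  have "(2^a * 3^N)^5 = (2::nat)^(5*a) * (3^5)^N"
    by (simp only: power_mult_distrib power_mult[symmetric] mult.commute)
  also have "\<dots> \<le> 2^(2*N) * (3^5)^N"
    using assms by (intro mult_right_mono power_increasing) simp_all
  also have "\<dots> = (4 * 3^5)^N"
    by (simp only: power_mult power_mult_distrib) simp
  also have "\<dots> \<le> (4^5)^N"
    by (rule power_mono) simp_all
  also have "\<dots> = ((4::nat)^N)^5"
    by (simp only: power_mult[symmetric] mult.commute)
  finally show ?thesis
    by (subst (asm) power_mono_iff) simp_all
qed

lemma two_pow_mult_card_small_subsets_le:
  assumes "100 * L < 38 * N"
  shows "2^Suc L * card (small_subsets N (N div 100)) \<le> 2^N"
proof (cases "N < 100")
  case True
  then have "small_subsets N (N div 100) = {{}}"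
    unfolding small_subsets_def by (auto simp: card_eq_0_iff dest: finite_subset)
  moreover have "Suc L \<le> N"
    using assms by linarith
  ultimately show ?thesis
    using power_increasing[of "Suc L" N "2::nat"] by simp
next
  case False
  let ?t = "N div 100"
  have "2^N * (2^Suc L * card (small_subsets N ?t)) \<le> 2^Suc L * (2^?t * 3^N)"
    using card_small_subsets_le[of ?t N] by (simp add: mult.left_commute)
  also have "\<dots> = 2^(Suc L + ?t) * 3^N"
    by (simp add: power_add)
  also have "\<dots> \<le> 4^N"
  proof (rule two_pow_mult_three_pow_le_four_pow)
    show "5 * (Suc L + ?t) \<le> 2 * N"
      using assms False div_times_less_eq_dividend[of N 100] by (simp add: add_mult_distrib2)
  qed
  also have "\<dots> = 2^N * 2^N"
    by (simp flip: power_mult_distrib)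
  finally show ?thesis
    by simp
qed

lemma card_bool_lists_length_le_less: "card {xs :: bool list. length xs \<le> L} < 2^Suc L"
proof -
  have "card {xs :: bool list. length xs \<le> L} = (\<Sum>i\<le>L. 2^i)"
    using card_lists_length_le[of "UNIV :: bool set" L] by simp
  also have "\<dots> < 2^Suc L"
    by (induction L) auto
  finally show ?thesis .
qed

lemma card_Pow_le_codes_mult_small_subsets:
  fixes g :: "nat set \<Rightarrow> 'a" and dec :: "'a \<Rightarrow> nat \<Rightarrow> bool"
  assumes few_errors: "\<And>x. x \<subseteq> {..<N} \<Longrightarrow> card {j. j < N \<and> dec (g x) j \<noteq> (j \<in> x)} \<le> t"
  shows "2^N \<le> card (g ` Pow {..<N}) * card (small_subsets N t)"
proof -
  let ?G = "g ` Pow {..<N}"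
  define fix_errors where "fix_errors = (\<lambda>(c, D). {j. j < N \<and> dec c j} - D \<union> (D - {j. j < N \<and> dec c j}))"
  have "Pow {..<N} \<subseteq> fix_errors ` (?G \<times> small_subsets N t)"
  proof
    fix x assume x: "x \<in> Pow {..<N}"
    let ?D = "{j. j < N \<and> dec (g x) j \<noteq> (j \<in> x)}"
    have "?D \<in> small_subsets N t"
      using few_errors x unfolding small_subsets_def by auto
    moreover have "x = fix_errors (g x, ?D)"
      using x unfolding fix_errors_def by auto
    ultimately show "x \<in> fix_errors ` (?G \<times> small_subsets N t)"
      using x by blast
  qed
  then have "card (Pow {..<N}) \<le> card (?G \<times> small_subsets N t)"
    using finite_small_subsets
    by (meson card_image_le card_mono finite_Pow_iff finite_SigmaI finite_imageI finite_lessThan order_trans)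
  then show ?thesis
    by (simp add: card_Pow card_cartesian_product)
qed

lemma pmf_exists_mostly_correct:
  fixes p :: "'a pmf"
  assumes correct: "\<And>j. j < N \<Longrightarrow> measure_pmf.prob p {\<gamma>. P j \<gamma>} \<ge> 0.99"
  shows "\<exists>\<gamma>\<in>set_pmf p. 99 * N \<le> 100 * card {j. j < N \<and> P j \<gamma>}"
proof (rule ccontr)
  assume "\<not> ?thesis"
  then have few: "real (card {j. j < N \<and> P j \<gamma>}) \<le> (99 * real N - 1) / 100" if "\<gamma> \<in> set_pmf p" for \<gamma>
    using that by (auto simp: not_le)
  define hits where "hits \<gamma> = (\<Sum>j<N. indicator {\<gamma>. P j \<gamma>} \<gamma> :: real)" for \<gamma>
  have hits_card: "hits \<gamma> = real (card {j. j < N \<and> P j \<gamma>})" for \<gamma>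
  proof -
    have "hits \<gamma> = (\<Sum>j\<in>{j. j < N \<and> P j \<gamma>}. 1)"
      unfolding hits_def indicator_def by (rule sum.mono_neutral_cong_right) auto
    then show ?thesis by simp
  qed
  have integrable: "integrable (measure_pmf p) (indicator {\<gamma>. P j \<gamma>} :: _ \<Rightarrow> real)" for j
    by (intro integrable_real_indicator) (auto simp: less_top[symmetric])
  have "0.99 * real N = (\<Sum>j<N. 0.99)"
    by simp
  also have "\<dots> \<le> (\<Sum>j<N. measure_pmf.prob p {\<gamma>. P j \<gamma>})"
    using correct by (intro sum_mono) auto
  also have "\<dots> = measure_pmf.expectation p hits"
    unfolding hits_def using integrable by simp
  also have "\<dots> \<le> (99 * real N - 1) / 100"
  proof (rule measure_pmf.integral_le_const)
    show "integrable (measure_pmf p) hits"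
      unfolding hits_def using integrable by simp
    show "AE \<gamma> in measure_pmf p. hits \<gamma> \<le> (99 * real N - 1) / 100"
      using few by (simp add: AE_measure_pmf_iff hits_card)
  qed
  finally show False
    by simp
qed

lemma card_lessThan_filter_add_card_lessThan_filter_not:
  "card {j. j < N \<and> P j} + card {j. j < N \<and> \<not> P j} = N"
proof -
  have "card {j. j < N \<and> P j} + card {j. j < N \<and> \<not> P j} = card ({j. j < N \<and> P j} \<union> {j. j < N \<and> \<not> P j})"
    by (rule card_Un_disjoint[symmetric]) auto
  also have "{j. j < N \<and> P j} \<union> {j. j < N \<and> \<not> P j} = {..<N}"
    by auto
  finally show ?thesis
    by simp
qed

lemma index_coding_lower_bound:
  fixes C :: "nat set \<Rightarrow> bool list pmf" and dec :: "bool list \<Rightarrow> nat \<Rightarrow> bool"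
  assumes decodes: "\<And>x j. x \<subseteq> {..<N} \<Longrightarrow> j < N \<Longrightarrow> measure_pmf.prob (C x) {\<Gamma>. dec \<Gamma> j = (j \<in> x)} \<ge> 0.99"
  shows "\<exists>x \<subseteq> {..<N}. \<exists>\<Gamma>\<in>set_pmf (C x). 38 * N \<le> 100 * length \<Gamma>"
proof (rule ccontr)
  assume short: "\<not> ?thesis"
  obtain \<Gamma>\<^sub>0 where "\<Gamma>\<^sub>0 \<in> set_pmf (C {})"
    using set_pmf_not_empty by fast
  then have "N \<ge> 1"
    using short by fastforce
  define L where "L = (38 * N - 1) div 100"
  have L: "100 * L < 38 * N"
    unfolding L_def using \<open>N \<ge> 1\<close> by linarith
  have "\<exists>\<Gamma>\<in>set_pmf (C x). 99 * N \<le> 100 * card {j. j < N \<and> dec \<Gamma> j = (j \<in> x)}" if "x \<subseteq> {..<N}" for x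
    using pmf_exists_mostly_correct[of N "C x" "\<lambda>j \<Gamma>. dec \<Gamma> j = (j \<in> x)"] decodes[OF that] by simp
  then obtain g where g: "\<And>x. x \<subseteq> {..<N} \<Longrightarrow>
      g x \<in> set_pmf (C x) \<and> 99 * N \<le> 100 * card {j. j < N \<and> dec (g x) j = (j \<in> x)}"
    by metis
  have "card {j. j < N \<and> dec (g x) j \<noteq> (j \<in> x)} \<le> N div 100" if "x \<subseteq> {..<N}" for x
  proof -
    have "100 * card {j. j < N \<and> dec (g x) j \<noteq> (j \<in> x)} \<le> N"
      using g[OF that] card_lessThan_filter_add_card_lessThan_filter_not[of N "\<lambda>j. dec (g x) j = (j \<in> x)"]
      by linarith
    then show ?thesis
      by (simp add: less_eq_div_iff_mult_less_eq mult.commute)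
  qed
  then have codes: "2^N \<le> card (g ` Pow {..<N}) * card (small_subsets N (N div 100))"
    by (rule card_Pow_le_codes_mult_small_subsets)
  have "length (g x) \<le> L" if "x \<subseteq> {..<N}" for x
  proof -
    have "100 * length (g x) < 38 * N"
      using short g[OF that] that by (meson not_le)
    then show ?thesis
      unfolding L_def by (simp add: less_eq_div_iff_mult_less_eq)
  qed
  then have "card (g ` Pow {..<N}) \<le> card {xs :: bool list. length xs \<le> L}"
    using finite_lists_length_le[of "UNIV :: bool set" L] by (intro card_mono) auto
  then have "card (g ` Pow {..<N}) < 2^Suc L"
    using card_bool_lists_length_le_less[of L] by linarith
  moreover have "card (small_subsets N (N div 100)) > 0"
    using codes by (cases "card (small_subsets N (N div 100)) = 0") auto
  ultimately have "2^N < 2^Suc L * card (small_subsets N (N div 100))"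
    using codes by (meson mult_less_mono1 order.strict_trans1)
  with two_pow_mult_card_small_subsets_le[OF L] show False
    by simp
qed

definition long_sketch ::
  "('f set \<Rightarrow> ('f set \<Rightarrow> 'f set) list \<Rightarrow> bool list pmf) \<Rightarrow> nat \<Rightarrow> nat \<Rightarrow> real \<Rightarrow> bool" where
  "long_sketch compress k n L \<longleftrightarrow>
     (\<exists>I hs \<Gamma>. finite I \<and> card I \<le> n \<and> length hs = k \<and> (\<forall>h\<in>set hs. hypothetical h) \<and>
        \<Gamma> \<in> set_pmf (compress I hs) \<and> L \<le> real (length \<Gamma>))"

lemma long_sketch_mono:
  "long_sketch compress k n L \<Longrightarrow> n \<le> n' \<Longrightarrow> L' \<le> L \<Longrightarrow> long_sketch compress k n' L'"
  unfolding long_sketch_def by (fastforce intro: order_trans)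

lemma long_sketch_zero: "long_sketch compress k n 0"
proof -
  obtain \<Gamma> where "\<Gamma> \<in> set_pmf (compress {} (replicate k id))"
    using set_pmf_not_empty by fast
  then show ?thesis
    unfolding long_sketch_def hypothetical_def
    by (intro exI[of _ "{}"] exI[of _ "replicate k id"] exI[of _ \<Gamma>]) auto
qed

lemma long_sketch_of_index_encoding:
  fixes inst :: "nat set \<Rightarrow> 'f set" and scen :: "nat \<Rightarrow> nat set"
  assumes provisions: "provisioning_scheme Q k compress extract"
    and hs: "length hs = k" "\<forall>h\<in>set hs. hypothetical h"
    and scen: "\<And>j. j < N \<Longrightarrow> scen j \<noteq> {} \<and> scen j \<subseteq> {..<k}"
    and inst: "\<And>x. x \<subseteq> {..<N} \<Longrightarrow> finite (inst x) \<and> card (inst x) \<le> n"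
    and answer: "\<And>x j. x \<subseteq> {..<N} \<Longrightarrow> j < N \<Longrightarrow> Q (scenario_inst (inst x) hs (scen j)) \<longleftrightarrow> j \<in> x"
  shows "long_sketch compress k n (38/100 * N)"
proof -
  have "\<exists>x \<subseteq> {..<N}. \<exists>\<Gamma>\<in>set_pmf (compress (inst x) hs). 38 * N \<le> 100 * length \<Gamma>"
  proof (rule index_coding_lower_bound[where dec = "\<lambda>\<Gamma> j. extract \<Gamma> (scen j)"])
    fix x j assume x: "x \<subseteq> {..<N}" and j: "j < N"
    have "measure_pmf.prob (compress (inst x) hs)
        {\<Gamma>. extract \<Gamma> (scen j) = Q (scenario_inst (inst x) hs (scen j))} \<ge> 0.99"
      using provisions hs inst[OF x] scen[OF j] unfolding provisioning_scheme_def by blast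
    then show "measure_pmf.prob (compress (inst x) hs) {\<Gamma>. extract \<Gamma> (scen j) = (j \<in> x)} \<ge> 0.99"
      using answer[OF x j] by simp
  qed
  then obtain x \<Gamma> where x: "x \<subseteq> {..<N}" and \<Gamma>: "\<Gamma> \<in> set_pmf (compress (inst x) hs)" "38 * N \<le> 100 * length \<Gamma>"
    by blast
  have "38/100 * real N \<le> real (length \<Gamma>)"
    using of_nat_mono[OF \<Gamma>(2), where 'a = real] by simp
  then show ?thesis
    unfolding long_sketch_def using \<Gamma>(1) hs inst[OF x]
    by (intro exI[of _ "inst x"] exI[of _ hs] exI[of _ \<Gamma>]) auto
qed

lemma scenario_inst_replicate_id: "1 \<le> k \<Longrightarrow> scenario_inst I (replicate k id) {0} = I"
  unfolding scenario_inst_def by simp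

lemma long_sketch_of_separating_pair:
  assumes provisions: "provisioning_scheme Q k compress extract" and "1 \<le> k"
    and "finite I_false" "card I_false \<le> n" "\<not> Q I_false"
    and "finite I_true" "card I_true \<le> n" "Q I_true"
  shows "long_sketch compress k n (38/100)"
proof -
  have "long_sketch compress k n (38/100 * real 1)"
    using assms
    by (intro long_sketch_of_index_encoding[where inst = "\<lambda>x. if 0 \<in> x then I_true else I_false"
          and hs = "replicate k id" and scen = "\<lambda>_. {0}"])
       (auto simp: hypothetical_def scenario_inst_replicate_id)
  then show ?thesis
    by simp
qed

lemma hypothetical_Int: "hypothetical (\<lambda>J. J \<inter> F)"
  unfolding hypothetical_def by blast

lemma scenario_inst_filters:
  assumes "S \<subseteq> {..<k}"
  shows "scenario_inst I (map (\<lambda>i J. J \<inter> F i) [0..<k]) S = I \<inter> (\<Union>i\<in>S. F i)"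
proof -
  have "scenario_inst I (map (\<lambda>i J. J \<inter> F i) [0..<k]) S = (\<Union>i\<in>S. I \<inter> F i)"
    unfolding scenario_inst_def using assms by (intro SUP_cong) auto
  then show ?thesis
    by blast
qed

lemma double_add_of_bool_eq_iff:
  "2 * j + of_bool b = 2 * j' + of_bool b' \<longleftrightarrow> j = j' \<and> b = b'" for j j' :: nat
proof
  assume eq: "2 * j + of_bool b = 2 * j' + of_bool b'"
  have "j = (2 * j + of_bool b) div 2" "j' = (2 * j' + of_bool b') div 2"
    by simp_all
  moreover have "b \<longleftrightarrow> odd (2 * j + of_bool b)" "b' \<longleftrightarrow> odd (2 * j' + of_bool b')"
    by simp_all
  ultimately show "j = j' \<and> b = b'"
    using eq by metis
qed simp

text \<open>Bit \<open>b\<close> in position \<open>j\<close> of \<open>v\<close> selects hypothetical \<open>2j + b + 1\<close>; hypothetical 0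
  belongs to every scenario and only makes it nonempty.\<close>

definition index_scenario :: "nat \<Rightarrow> nat \<Rightarrow> nat set" where
  "index_scenario m v = insert 0 ((\<lambda>j. Suc (2 * j + of_bool (bit v j))) ` {..<m})"

lemma index_scenario_subset: "index_scenario m v \<subseteq> {..<Suc (2 * m)}"
  unfolding index_scenario_def by fastforce

lemma index_scenario_nonempty: "index_scenario m v \<noteq> {}"
  unfolding index_scenario_def by simp

lemma Suc_mem_index_scenario_iff:
  assumes "j < m"
  shows "Suc (2 * j + of_bool b) \<in> index_scenario m v \<longleftrightarrow> b = bit v j"
proof -
  have "Suc (2 * j + of_bool b) \<in> index_scenario m v
      \<longleftrightarrow> (\<exists>j'\<in>{..<m}. 2 * j + of_bool b = 2 * j' + of_bool (bit v j'))"
    unfolding index_scenario_def by (simp only: insert_iff image_iff nat.inject Suc_not_Zero simp_thms)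
  also have "\<dots> \<longleftrightarrow> b = bit v j"
    using assms by (simp only: double_add_of_bool_eq_iff) auto
  finally show ?thesis .
qed

lemma index_scenario_antichain:
  fixes v w :: nat
  assumes "v < 2^m" "w < 2^m" "index_scenario m w \<subseteq> index_scenario m v"
  shows "w = v"
proof -
  have "bit w j = bit v j" if "j < m" for j
    using assms(3) Suc_mem_index_scenario_iff[OF that] by (metis subsetD)
  then have "take_bit m w = take_bit m v"
    by (intro bit_eqI) (auto simp: bit_take_bit_iff)
  with assms(1,2) show ?thesis
    by (simp add: take_bit_nat_eq_self)
qed

definition notsub_instance :: "nat set \<Rightarrow> ab_fact set" where
  "notsub_instance x = A_fact ` x \<union> B_fact ` x"

text \<open>The \<open>i\<close>-th hypothetical keeps the facts in \<open>notsub_kept m i\<close> (and likewise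
  \<open>conn_kept m i\<close> below).\<close>

definition notsub_kept :: "nat \<Rightarrow> nat \<Rightarrow> ab_fact set" where
  "notsub_kept m i = range A_fact \<union> {B_fact v |v. i \<notin> index_scenario m v}"

lemma Q_NOTSUB_notsub_scenario_iff:
  assumes x: "x \<subseteq> {..<2^m}" and w: "w < 2^m"
  shows "Q_NOTSUB (notsub_instance x \<inter> (\<Union>i\<in>index_scenario m w. notsub_kept m i)) \<longleftrightarrow> w \<in> x"
proof -
  let ?I = "notsub_instance x \<inter> (\<Union>i\<in>index_scenario m w. notsub_kept m i)"
  have A: "A_fact v \<in> ?I \<longleftrightarrow> v \<in> x" for v
    using index_scenario_nonempty[of m w] unfolding notsub_instance_def notsub_kept_def by auto
  have B: "B_fact v \<in> ?I \<longleftrightarrow> v \<in> x \<and> \<not> index_scenario m w \<subseteq> index_scenario m v" for v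
    unfolding notsub_instance_def notsub_kept_def by auto
  have "Q_NOTSUB ?I \<longleftrightarrow> (\<exists>v\<in>x. index_scenario m w \<subseteq> index_scenario m v)"
    unfolding Q_NOTSUB_def A B by blast
  also have "\<dots> \<longleftrightarrow> w \<in> x"
    using x w index_scenario_antichain by blast
  finally show ?thesis .
qed

lemma long_sketch_NOTSUB:
  assumes provisions: "provisioning_scheme Q_NOTSUB k compress extract" and "2 * m < k"
  shows "long_sketch compress k (3 * 2^m) (38/100 * 2^m)"
proof -
  have "card (notsub_instance x) \<le> 3 * 2^m" if "x \<subseteq> {..<2^m}" for x
  proof -
    have "card (notsub_instance x) \<le> card x + card x"
      unfolding notsub_instance_def
      by (meson add_mono card_Un_le card_image_le finite_lessThan finite_subset order_trans that)
    moreover have "card x \<le> 2^m"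
      using card_mono[OF _ that] by simp
    ultimately show ?thesis by linarith
  qed
  moreover have "finite (notsub_instance x)" if "x \<subseteq> {..<2^m}" for x
    using that finite_subset unfolding notsub_instance_def by blast
  moreover have "index_scenario m w \<subseteq> {..<k}" for w
    using index_scenario_subset \<open>2 * m < k\<close> by fastforce
  ultimately have "long_sketch compress k (3 * 2^m) (38/100 * real (2^m))"
    using provisions
    by (intro long_sketch_of_index_encoding[where inst = notsub_instance
          and hs = "map (\<lambda>i J. J \<inter> notsub_kept m i) [0..<k]" and scen = "index_scenario m"])
       (auto simp: hypothetical_Int scenario_inst_filters Q_NOTSUB_notsub_scenario_iff index_scenario_nonempty)
  then show ?thesis
    by simp
qed

lemma long_sketch_NOTSUB_small:
  assumes "provisioning_scheme Q_NOTSUB k compress extract" and "1 \<le> k"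
  shows "long_sketch compress k 1 (38/100)"
  by (rule long_sketch_of_separating_pair[OF assms, where I_false = "{}" and I_true = "{A_fact 0}"]) (auto simp: Q_NOTSUB_def)

text \<open>Trie node \<open>p < 2\<^sup>j\<close> at depth \<open>j\<close> is the number \<open>prod_encode (j, p)\<close>; the root is
  \<open>const_s = 0\<close>, and \<open>const_t = 1 = prod_encode (0, 1)\<close> is not a trie node.\<close>

definition node :: "nat \<Rightarrow> nat \<Rightarrow> nat" where
  "node j p = prod_encode (j, p)"

definition trie_edge :: "nat \<Rightarrow> nat \<Rightarrow> bool \<Rightarrow> e_fact" where
  "trie_edge j p b = E_fact (node j p) (node (Suc j) (p + 2^j * of_bool b))"

definition trie :: "nat \<Rightarrow> e_fact set" where
  "trie m = {trie_edge j p b |j p b. j < m \<and> p < 2^j}"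

definition leaf_edges :: "nat \<Rightarrow> nat set \<Rightarrow> e_fact set" where
  "leaf_edges m x = (\<lambda>v. E_fact (node m v) const_t) ` x"

definition trie_towards :: "nat \<Rightarrow> nat \<Rightarrow> e_fact set" where
  "trie_towards m w = {trie_edge j p (bit w j) |j p. j < m \<and> p < 2^j}"

definition conn_kept :: "nat \<Rightarrow> nat \<Rightarrow> e_fact set" where
  "conn_kept m i = {trie_edge j p b |j p b. Suc (2 * j + of_bool b) = i} \<union> range (\<lambda>v. E_fact (node m v) const_t)"

lemma node_eq_iff [simp]: "node j p = node j' p' \<longleftrightarrow> j = j' \<and> p = p'"
  unfolding node_def by simp

lemma const_s_eq_node: "const_s = node 0 0"
  unfolding node_def const_s_def by (simp add: prod_encode_def)

lemma const_t_eq_node: "const_t = node 0 1"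
  unfolding node_def const_t_def by (simp add: prod_encode_def)

lemma trie_edge_eq_iff [simp]: "trie_edge j p b = trie_edge j' p' b' \<longleftrightarrow> j = j' \<and> p = p' \<and> b = b'"
  unfolding trie_edge_def by auto

lemma trie_edge_ne_leaf_edge [simp]: "trie_edge j p b \<noteq> E_fact (node m v) const_t"
  unfolding trie_edge_def const_t_eq_node by simp

lemma trie_eq_image: "trie m = (\<lambda>(j, p, b). trie_edge j p b) ` (SIGMA j:{..<m}. {..<2^j} \<times> UNIV)"
  unfolding trie_def by (auto simp: image_iff)

lemma finite_trie: "finite (trie m)"
  unfolding trie_eq_image by auto

lemma card_trie_le: "card (trie m) \<le> 2 * 2^m"
proof -
  have "card (trie m) \<le> card (SIGMA j:{..<m}. {..<(2::nat)^j} \<times> (UNIV :: bool set))"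
    unfolding trie_eq_image by (rule card_image_le) auto
  also have "\<dots> = 2 * (\<Sum>j<m. 2^j)"
    by (simp add: card_cartesian_product sum_distrib_left mult.commute)
  also have "\<dots> \<le> 2 * 2^m"
    using sum_power2[of m] by (simp add: atLeast0LessThan)
  finally show ?thesis .
qed

lemma trie_edge_mem_conn_kepts_iff:
  "trie_edge j p b \<in> (\<Union>i\<in>S. conn_kept m i) \<longleftrightarrow> Suc (2 * j + of_bool b) \<in> S"
  unfolding conn_kept_def by auto

lemma leaf_edge_mem_conn_kepts: "S \<noteq> {} \<Longrightarrow> E_fact (node m v) const_t \<in> (\<Union>i\<in>S. conn_kept m i)"
  unfolding conn_kept_def by blast

lemma conn_scenario_eq:
  "(trie m \<union> leaf_edges m x) \<inter> (\<Union>i\<in>index_scenario m w. conn_kept m i) = trie_towards m w \<union> leaf_edges m x"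
proof -
  let ?L = "\<Union>i\<in>index_scenario m w. conn_kept m i"
  have label: "trie_edge j p b \<in> ?L \<longleftrightarrow> b = bit w j" if "j < m" for j p b
    using that by (simp only: trie_edge_mem_conn_kepts_iff Suc_mem_index_scenario_iff)
  have "trie m \<inter> ?L = trie_towards m w"
  proof (intro equalityI subsetI)
    fix e assume "e \<in> trie m \<inter> ?L"
    then obtain j p b where j: "j < m" "p < 2^j" and e: "e = trie_edge j p b" "e \<in> ?L"
      unfolding trie_def by blast
    then have "b = bit w j"
      using label by blast
    with j e(1) show "e \<in> trie_towards m w"
      unfolding trie_towards_def by blast
  next
    fix e assume "e \<in> trie_towards m w"
    then obtain j p where j: "j < m" "p < 2^j" and e: "e = trie_edge j p (bit w j)"
      unfolding trie_towards_def by blast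
    then have "e \<in> ?L"
      using label by blast
    with j e show "e \<in> trie m \<inter> ?L"
      unfolding trie_def by blast
  qed
  moreover have "leaf_edges m x \<subseteq> ?L"
    unfolding leaf_edges_def using leaf_edge_mem_conn_kepts[OF index_scenario_nonempty] by blast
  ultimately show ?thesis
    by blast
qed

lemma T_derived_trie_towards_imp:
  assumes "T_derived (trie_towards m w \<union> leaf_edges m x) y" and w: "w < 2^m" and x: "x \<subseteq> {..<2^m}"
  shows "(\<exists>j\<le>m. y = node j (take_bit j w)) \<or> (y = const_t \<and> w \<in> x)"
  using assms(1)
proof (induction rule: T_derived.induct)
  case T_base
  show ?case
    using const_s_eq_node by auto
next
  case (T_step y z)
  from T_step.hyps(2) consider
      (trie) j p where "j < m" "p < 2^j" "E_fact y z = trie_edge j p (bit w j)"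
    | (leaf) v where "v \<in> x" "y = node m v" "z = const_t"
    unfolding trie_towards_def leaf_edges_def by blast
  then show ?case
  proof cases
    case trie
    then have "y = node j p" "z = node (Suc j) (p + 2^j * of_bool (bit w j))"
      unfolding trie_edge_def by auto
    moreover from this T_step.IH trie(2) have "p = take_bit j w"
      by (auto simp: const_t_eq_node)
    ultimately show ?thesis
      using trie(1) by (auto simp: take_bit_Suc_from_most)
  next
    case leaf
    with T_step.IH x have "v = take_bit m w"
      by (auto simp: const_t_eq_node)
    with leaf w show ?thesis
      by (simp add: take_bit_nat_eq_self)
  qed
qed

lemma T_derived_trie_towards_node:
  assumes "j \<le> m"
  shows "T_derived (trie_towards m w \<union> leaf_edges m x) (node j (take_bit j w))"
  using assms
proof (induction j)
  case 0
  then show ?case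
    using T_derived.T_base const_s_eq_node by simp
next
  case (Suc j)
  have "trie_edge j (take_bit j w) (bit w j) \<in> trie_towards m w"
    unfolding trie_towards_def using Suc.prems by auto
  with Suc show ?case
    by (auto intro: T_derived.T_step simp: trie_edge_def take_bit_Suc_from_most add.commute)
qed

lemma Q_CONN_trie_towards_iff:
  assumes w: "w < 2^m" and x: "x \<subseteq> {..<2^m}"
  shows "Q_CONN (trie_towards m w \<union> leaf_edges m x) \<longleftrightarrow> w \<in> x"
proof
  assume "Q_CONN (trie_towards m w \<union> leaf_edges m x)"
  then show "w \<in> x"
    using T_derived_trie_towards_imp[OF _ w x] unfolding Q_CONN_def
    by (metis const_t_eq_node node_eq_iff take_bit_of_1 take_bit_0 zero_neq_one)
next
  assume "w \<in> x"
  then have "E_fact (node m (take_bit m w)) const_t \<in> leaf_edges m x"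
    unfolding leaf_edges_def using w by (simp add: take_bit_nat_eq_self)
  then show "Q_CONN (trie_towards m w \<union> leaf_edges m x)"
    unfolding Q_CONN_def using T_derived_trie_towards_node[of m m w x]
    by (auto intro: T_derived.T_step)
qed

lemma long_sketch_CONN:
  assumes provisions: "provisioning_scheme Q_CONN k compress extract" and "2 * m < k"
  shows "long_sketch compress k (3 * 2^m) (38/100 * 2^m)"
proof -
  have "card (trie m \<union> leaf_edges m x) \<le> 3 * 2^m" if "x \<subseteq> {..<2^m}" for x
  proof -
    have "card (leaf_edges m x) \<le> 2^m"
      unfolding leaf_edges_def using that
      by (metis card_image_le card_lessThan card_mono finite_lessThan finite_subset order_trans)
    then show ?thesis
      using card_trie_le[of m] card_Un_le[of "trie m" "leaf_edges m x"] by linarith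
  qed
  moreover have "finite (trie m \<union> leaf_edges m x)" if "x \<subseteq> {..<2^m}" for x
    using that finite_subset finite_trie unfolding leaf_edges_def by fastforce
  moreover have "index_scenario m w \<subseteq> {..<k}" for w
    using index_scenario_subset \<open>2 * m < k\<close> by fastforce
  ultimately have "long_sketch compress k (3 * 2^m) (38/100 * real (2^m))"
    using provisions \<open>2 * m < k\<close>
    by (intro long_sketch_of_index_encoding[where inst = "\<lambda>x. trie m \<union> leaf_edges m x"
          and hs = "map (\<lambda>i J. J \<inter> conn_kept m i) [0..<k]" and scen = "index_scenario m"])
       (auto simp: hypothetical_Int scenario_inst_filters conn_scenario_eq Q_CONN_trie_towards_iff
          index_scenario_nonempty)
  then show ?thesis
    by simp
qed

lemma long_sketch_CONN_small:
  assumes "provisioning_scheme Q_CONN k compress extract" and "1 \<le> k"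
  shows "long_sketch compress k 1 (38/100)"
proof (rule long_sketch_of_separating_pair[OF assms, where I_false = "{}" and I_true = "{E_fact const_s const_t}"])
  have "T_derived {} y \<Longrightarrow> y = const_s" for y
    by (induction rule: T_derived.induct) auto
  then show "\<not> Q_CONN {}"
    unfolding Q_CONN_def const_s_def const_t_def by force
  show "Q_CONN {E_fact const_s const_t}"
    unfolding Q_CONN_def by (auto intro: T_derived.T_step T_derived.T_base)
qed auto

lemma exists_dyadic_scale:
  assumes "3 \<le> (n::nat)"
  shows "\<exists>m\<le>M. 3 * 2^m \<le> n \<and> (m = M \<or> n < 6 * 2^m)"
proof (induction M)
  case 0
  then show ?case
    using assms by auto
next
  case (Suc M)
  then obtain m where m: "m \<le> M" "3 * 2^m \<le> n" "m = M \<or> n < 6 * 2^m"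
    by blast
  show ?case
  proof (cases "n < 6 * 2^m")
    case True
    with m show ?thesis
      by (intro exI[of _ m]) auto
  next
    case False
    with m show ?thesis
      by (intro exI[of _ "Suc M"]) auto
  qed
qed

lemma requires_sketch_sizeI:
  assumes small: "\<And>k compress extract. 1 \<le> k \<Longrightarrow> provisioning_scheme Q k compress extract \<Longrightarrow>
      long_sketch compress k 1 (38/100)"
    and large: "\<And>k m compress extract. 2 * m < k \<Longrightarrow> provisioning_scheme Q k compress extract \<Longrightarrow>
      long_sketch compress k (3 * 2^m) (38/100 * 2^m)"
  shows "requires_sketch_size Q"
proof -
  have "long_sketch compress k n (1/20 * min (2 powr (1/20 * real k)) (real n))"
    if k: "1 \<le> k" and provisions: "provisioning_scheme Q k compress decode" for k n compress decode
  proof -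
    consider "n = 0" | "1 \<le> n" "n < 3" | "3 \<le> n"
      by linarith
    then show ?thesis
    proof cases
      case 1
      then show ?thesis
        using long_sketch_zero by simp
    next
      case 2
      then show ?thesis
        by (intro long_sketch_mono[OF small[OF k provisions]]) auto
    next
      case 3
      define M where "M = (k - 1) div 2"
      obtain m where m: "m \<le> M" "3 * 2^m \<le> n" "m = M \<or> n < 6 * 2^m"
        using exists_dyadic_scale[OF 3] by blast
      have "2 * m < k"
        using m(1) k unfolding M_def by linarith
      have bound: "min (2 powr (1/20 * real k)) (real n) \<le> 6 * 2^m"
      proof (cases "m = M")
        case True
        have "2 powr (1/20 * real k) \<le> 2 powr real (Suc m)"
          using True k unfolding M_def by (intro powr_mono) linarith+
        also have "\<dots> = 2 * 2^m"
          by (subst powr_realpow) auto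
        also have "\<dots> \<le> 6 * 2^m"
          by simp
        finally show ?thesis
          by (rule min.coboundedI1)
      next
        case False
        with m(3) have "real n \<le> 6 * 2^m"
          using of_nat_mono[of n "6 * 2^m", where 'a = real] by simp
        then show ?thesis
          by (rule min.coboundedI2)
      qed
      have "(0::real) \<le> 2^m"
        by simp
      with bound have "1/20 * min (2 powr (1/20 * real k)) (real n) \<le> 38/100 * 2^m"
        by linarith
      with m(2) show ?thesis
        by (intro long_sketch_mono[OF large[OF \<open>2 * m < k\<close> provisions]])
    qed
  qed
  then show ?thesis
    unfolding requires_sketch_size_def long_sketch_def[symmetric]
    by (intro exI[of _ "1/20"]) auto
qed

theorem mainTheorem14:
  shows "requires_sketch_size Q_NOTSUB \<and> requires_sketch_size Q_CONN"
proof
  show "requires_sketch_size Q_NOTSUB"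
    using long_sketch_NOTSUB_small long_sketch_NOTSUB by (rule requires_sketch_sizeI)
  show "requires_sketch_size Q_CONN"
    using long_sketch_CONN_small long_sketch_CONN by (rule requires_sketch_sizeI)
qed

end
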